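(* Let $B \subset \mathbb{R}^3$ be an open ball and let $\hat{P}' \in \mathbb{R}^3 \setminus B$. If $\hat{P} \in C^-(B,\hat{P}')$, then $C^-(B,\hat{P}) \subset C^-(B,\hat{P}')$.
   Context: For a bounded convex set $B \subset \mathbb{R}^3$ and a point $Q \in \mathbb{R}^3$ with $Q \notin B$, the negative half-cone $C^-(B,Q)$ is the set of points $Y \in \mathbb{R}^3 \setminus \mathrm{cl}(B)$ for which there exist $x' \in B$ and $0 < \alpha < 1$ such that $Y - Q = -\alpha (Q - x')$. Here $\mathrm{cl}(S)$ denotes the topological closure of $S$. *)

theory Defs
  imports "HOL-Analysis.Analysis"
begin

definition neg_half_cone :: "(real^3) set \<Rightarrow> real^3 \<Rightarrow> (real^3) set" where
  "neg_half_cone B Q = {Y. Y \<notin> closure B \<and>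
     (\<exists>x'\<in>B. \<exists>\<alpha>::real. 0 < \<alpha> \<and> \<alpha> < 1 \<and> Y - Q = - (\<alpha> *\<^sub>R (Q - x')))}"

end

theory Submission
  imports Defs
begin

(* A point of C^-(B,Q) lies on an open segment from Q towards a point of B. If
   P = (1 - a) Q + a x and Y = (1 - b) P + b y with x, y in B, then
   Y = (1 - g) Q + g z with g = a + b - a b in (0,1) and z a convex combination of
   x and y; so only the convexity of B matters. *)

lemma convex_combination_of_segment_point:
  fixes Q x y :: "'a::real_vector"
  assumes "convex S" "x \<in> S" "y \<in> S"
    and "0 < a" "a < 1" "0 < b" "b < 1"
  shows "\<exists>z\<in>S. \<exists>g. 0 < g \<and> g < 1 \<and>
           (1 - b) *\<^sub>R ((1 - a) *\<^sub>R Q + a *\<^sub>R x) + b *\<^sub>R y = (1 - g) *\<^sub>R Q + g *\<^sub>R z"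
proof -
  define g where "g = a + b - a * b"
  define z where "z = ((1 - b) * a / g) *\<^sub>R x + (b / g) *\<^sub>R y"
  have one_minus_g: "1 - g = (1 - a) * (1 - b)"
    unfolding g_def by (simp add: algebra_simps)
  have g_eq: "g = (1 - b) * a + b"
    unfolding g_def by (simp add: algebra_simps)
  have "0 < g" using assms(4-7) g_eq by (simp add: add_pos_pos)
  moreover have "g < 1"
  proof -
    have "0 < (1 - a) * (1 - b)" using assms(5,7) by simp
    then show ?thesis using one_minus_g by linarith
  qed
  moreover have "z \<in> S"
    unfolding z_def
  proof (rule convexD[OF assms(1-3)])
    show "(1 - b) * a / g + b / g = 1"
      using \<open>0 < g\<close> by (simp add: add_divide_distrib[symmetric] g_eq[symmetric])
  qed (use assms(4-7) \<open>0 < g\<close> in auto)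
  moreover have "(1 - b) *\<^sub>R ((1 - a) *\<^sub>R Q + a *\<^sub>R x) + b *\<^sub>R y = (1 - g) *\<^sub>R Q + g *\<^sub>R z"
  proof -
    have "g *\<^sub>R z = ((1 - b) * a) *\<^sub>R x + b *\<^sub>R y"
      unfolding z_def scaleR_add_right scaleR_scaleR using \<open>0 < g\<close> by simp
    then show ?thesis
      unfolding one_minus_g by (simp add: algebra_simps)
  qed
  ultimately show ?thesis by blast
qed

lemma neg_half_cone_iff:
  "Y \<in> neg_half_cone B Q \<longleftrightarrow>
     Y \<notin> closure B \<and> (\<exists>x\<in>B. \<exists>\<alpha>. 0 < \<alpha> \<and> \<alpha> < 1 \<and> Y = (1 - \<alpha>) *\<^sub>R Q + \<alpha> *\<^sub>R x)"
proof -
  have "Y - Q = - (\<alpha> *\<^sub>R (Q - x)) \<longleftrightarrow> Y = (1 - \<alpha>) *\<^sub>R Q + \<alpha> *\<^sub>R x" for \<alpha> x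
    by (auto simp: algebra_simps)
  then show ?thesis
    unfolding neg_half_cone_def by simp
qed

lemma neg_half_cone_subset:
  assumes "convex B" and "P \<in> neg_half_cone B P'"
  shows "neg_half_cone B P \<subseteq> neg_half_cone B P'"
proof
  fix Y assume "Y \<in> neg_half_cone B P"
  then obtain y b where "Y \<notin> closure B" "y \<in> B" "0 < b" "b < 1"
    and Y: "Y = (1 - b) *\<^sub>R P + b *\<^sub>R y"
    unfolding neg_half_cone_iff by blast
  obtain x a where "x \<in> B" "0 < a" "a < 1" and P: "P = (1 - a) *\<^sub>R P' + a *\<^sub>R x"
    using assms(2) unfolding neg_half_cone_iff by blast
  obtain z g where "z \<in> B" "0 < g" "g < 1" and "Y = (1 - g) *\<^sub>R P' + g *\<^sub>R z"
    using convex_combination_of_segment_point[OF assms(1) \<open>x \<in> B\<close> \<open>y \<in> B\<close>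
        \<open>0 < a\<close> \<open>a < 1\<close> \<open>0 < b\<close> \<open>b < 1\<close>, of P']
    unfolding Y P by blast
  with \<open>Y \<notin> closure B\<close> show "Y \<in> neg_half_cone B P'"
    unfolding neg_half_cone_iff by blast
qed

theorem proposition3:
  fixes c P P' :: "real^3" and r :: real
  assumes "r > 0"
    and "P' \<notin> ball c r"
    and "P \<in> neg_half_cone (ball c r) P'"
  shows "neg_half_cone (ball c r) P \<subseteq> neg_half_cone (ball c r) P'"
  using convex_ball assms(3) by (rule neg_half_cone_subset)

end
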